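(* Let $p,q,r,s\in\mathrm{baxt}_\infty$ with $\mathrm{ev}(p)=\mathrm{ev}(q)\leqslant\mathrm{ev}(r)$ and $\mathrm{ev}(p)=\mathrm{ev}(q)\leqslant\mathrm{ev}(s)$. Then $spr=sqr$ in $\mathrm{baxt}_\infty$.
   Context: Let $\mathcal{A}=\{1<2<3<\cdots\}$. Right strict binary search tree: labelled rooted binary tree in which each node's label is $\ge$ every label in its left subtree and $<$ every label in its right subtree; inserting $a$: if empty create node $a$, else with root label $x$ insert into right subtree if $a>x$, left subtree otherwise. $\mathrm{P}_{\mathrm{sylv}}(w_1\cdots w_k)$ is obtained from the empty tree by inserting $w_k,\dots,w_1$ in this order. Left strict binary search tree: each node's label is $>$ every label in its left subtree and $\le$ every label in its right subtree; inserting $a$: if empty create node $a$, else with root label $x$ insert into left subtree if $a<x$, right subtree otherwise. $\mathrm{P}^\sharp(w_1\cdots w_k)$ is obtained from the empty tree by inserting $w_1,\dots,w_k$ in this order. Set $\mathrm{P}_{\mathrm{baxt}}(w)=(\mathrm{P}^\sharp(w),\mathrm{P}_{\mathrm{sylv}}(w))$. The Baxter monoid $\mathrm{baxt}_\infty$ is $\mathcal{A}^*/{\equiv}$ with $u\equiv v\iff\mathrm{P}_{\mathrm{baxt}}(u)=\mathrm{P}_{\mathrm{baxt}}(v)$ (a congruence). The evaluation $\mathrm{ev}(u)$ is the tuple $(|u|_a)_{a\in\mathcal{A}}$ of numbers of occurrences of each symbol; it is constant on congruence classes, and $\mathrm{ev}(u)\leqslant\mathrm{ev}(v)$ means $|u|_a\le|v|_a$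 for all $a$. *)

theory Defs
  imports "HOL-Library.Tree"
begin

text \<open>Words over the alphabet 1 < 2 < 3 < ... are lists of positive naturals.\<close>

fun ins_right :: "nat \<Rightarrow> nat tree \<Rightarrow> nat tree" where
  "ins_right a Leaf = Node Leaf a Leaf"
| "ins_right a (Node l x r) =
     (if a > x then Node l x (ins_right a r) else Node (ins_right a l) x r)"

fun ins_left :: "nat \<Rightarrow> nat tree \<Rightarrow> nat tree" where
  "ins_left a Leaf = Node Leaf a Leaf"
| "ins_left a (Node l x r) =
     (if a < x then Node (ins_left a l) x r else Node l x (ins_left a r))"

definition P_sylv :: "nat list \<Rightarrow> nat tree" where
  "P_sylv w = fold ins_right (rev w) Leaf"

definition P_sharp :: "nat list \<Rightarrow> nat tree" where
  "P_sharp w = fold ins_left w Leaf"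

definition P_baxt :: "nat list \<Rightarrow> nat tree \<times> nat tree" where
  "P_baxt w = (P_sharp w, P_sylv w)"

text \<open>Baxter congruence: equality in baxt_infinity.\<close>
definition baxt_equiv :: "nat list \<Rightarrow> nat list \<Rightarrow> bool" where
  "baxt_equiv u v \<longleftrightarrow> P_baxt u = P_baxt v"

definition ev :: "nat list \<Rightarrow> nat \<Rightarrow> nat" where
  "ev w a = count_list w a"

end

theory Submission
  imports Defs "HOL-Library.Multiset"
begin

text \<open>
  Inserting a letter that already occurs in a binary search tree commutes with inserting any
  other letter already present: the search paths of two distinct letters \<open>a < b\<close> separate, at the
  latest, at the existing node labelled \<open>b\<close> (left strict trees) or \<open>a\<close> (right strict trees), so
  the two new leaves end up in different subtrees. Hence, once \<open>P_sharp s\<close> contains every letter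
  of \<open>p\<close>, inserting the letters of \<open>p\<close> or of any rearrangement \<open>q\<close> of them gives the same tree;
  symmetrically for \<open>P_sylv\<close>, which reads the word from the right and so
  inserts the letters of \<open>r\<close> first. Both tree shapes are sorted in the weak sense \<open>bst_wrt (\<le>)\<close>,
  which is all the argument needs.
\<close>

lemma set_tree_ins_left [simp]: "set_tree (ins_left a t) = insert a (set_tree t)"
  by (induction t) auto

lemma set_tree_ins_right [simp]: "set_tree (ins_right a t) = insert a (set_tree t)"
  by (induction t) auto

lemma bst_wrt_le_ins_left: "bst_wrt (\<le>) t \<Longrightarrow> bst_wrt (\<le>) (ins_left a t)"
  by (induction t) auto

lemma bst_wrt_le_ins_right: "bst_wrt (\<le>) t \<Longrightarrow> bst_wrt (\<le>) (ins_right a t)"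
  by (induction t) auto

lemma ins_left_commute_less:
  "bst_wrt (\<le>) t \<Longrightarrow> a < b \<Longrightarrow> b \<in> set_tree t \<Longrightarrow>
   ins_left a (ins_left b t) = ins_left b (ins_left a t)"
proof (induction t)
  case (Node l x r)
  consider "b < x" | "a < x" "x \<le> b" | "x \<le> a" by linarith
  then show ?case
  proof cases
    case 1
    with Node.prems have "b \<in> set_tree l" by auto
    with 1 Node show ?thesis by auto
  next
    case 3
    with Node.prems have "b \<in> set_tree r" by auto
    with 3 Node show ?thesis by auto
  qed auto
qed simp

lemma ins_right_commute_less:
  "bst_wrt (\<le>) t \<Longrightarrow> a < b \<Longrightarrow> a \<in> set_tree t \<Longrightarrow>
   ins_right a (ins_right b t) = ins_right b (ins_right a t)"
proof (induction t)
  case (Node l x r)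
  consider "x < a" | "a \<le> x" "x < b" | "b \<le> x" by linarith
  then show ?case
  proof cases
    case 1
    with Node.prems have "a \<in> set_tree r" by auto
    with 1 Node show ?thesis by auto
  next
    case 3
    with Node.prems have "a \<in> set_tree l" by auto
    with 3 Node show ?thesis by auto
  qed auto
qed simp

lemma ins_left_commute:
  "bst_wrt (\<le>) t \<Longrightarrow> a \<in> set_tree t \<Longrightarrow> b \<in> set_tree t \<Longrightarrow>
   ins_left a (ins_left b t) = ins_left b (ins_left a t)"
  by (metis ins_left_commute_less linorder_neqE_nat)

lemma ins_right_commute:
  "bst_wrt (\<le>) t \<Longrightarrow> a \<in> set_tree t \<Longrightarrow> b \<in> set_tree t \<Longrightarrow>
   ins_right a (ins_right b t) = ins_right b (ins_right a t)"
  by (metis ins_right_commute_less linorder_neqE_nat)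

lemma set_tree_fold_ins_left: "set_tree (fold ins_left xs t) = set xs \<union> set_tree t"
  by (induction xs arbitrary: t) auto

lemma set_tree_fold_ins_right: "set_tree (fold ins_right xs t) = set xs \<union> set_tree t"
  by (induction xs arbitrary: t) auto

lemma bst_wrt_le_fold_ins_left: "bst_wrt (\<le>) t \<Longrightarrow> bst_wrt (\<le>) (fold ins_left xs t)"
  by (induction xs arbitrary: t) (simp_all add: bst_wrt_le_ins_left)

lemma bst_wrt_le_fold_ins_right: "bst_wrt (\<le>) t \<Longrightarrow> bst_wrt (\<le>) (fold ins_right xs t)"
  by (induction xs arbitrary: t) (simp_all add: bst_wrt_le_ins_right)

lemma fold_ins_left_mset_eq:
  assumes "bst_wrt (\<le>) t" and "set xs \<subseteq> set_tree t" and "mset xs = mset ys"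
  shows "fold ins_left xs t = fold ins_left ys t"
  by (rule fold_permuted_eq[where P = "\<lambda>t. bst_wrt (\<le>) t \<and> set xs \<subseteq> set_tree t"])
    (use assms in \<open>auto simp: bst_wrt_le_ins_left intro: ins_left_commute\<close>)

lemma fold_ins_right_mset_eq:
  assumes "bst_wrt (\<le>) t" and "set xs \<subseteq> set_tree t" and "mset xs = mset ys"
  shows "fold ins_right xs t = fold ins_right ys t"
  by (rule fold_permuted_eq[where P = "\<lambda>t. bst_wrt (\<le>) t \<and> set xs \<subseteq> set_tree t"])
    (use assms in \<open>auto simp: bst_wrt_le_ins_right intro: ins_right_commute\<close>)

lemma P_sharp_mset_eq:
  assumes "mset p = mset q" and "set p \<subseteq> set s"
  shows "P_sharp (s @ p @ r) = P_sharp (s @ q @ r)"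
proof -
  have "fold ins_left p (P_sharp s) = fold ins_left q (P_sharp s)"
    using assms unfolding P_sharp_def
    by (intro fold_ins_left_mset_eq) (simp_all add: bst_wrt_le_fold_ins_left set_tree_fold_ins_left)
  then show ?thesis
    by (simp add: P_sharp_def)
qed

lemma P_sylv_mset_eq:
  assumes "mset p = mset q" and "set p \<subseteq> set r"
  shows "P_sylv (s @ p @ r) = P_sylv (s @ q @ r)"
proof -
  have "fold ins_right (rev p) (P_sylv r) = fold ins_right (rev q) (P_sylv r)"
    using assms unfolding P_sylv_def
    by (intro fold_ins_right_mset_eq) (simp_all add: bst_wrt_le_fold_ins_right set_tree_fold_ins_right)
  then show ?thesis
    by (simp add: P_sylv_def)
qed

lemma mset_eq_if_ev_eq: "ev u = ev v \<Longrightarrow> mset u = mset v"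
  unfolding ev_def by (simp add: multiset_eq_iff count_mset)

lemma set_subset_if_ev_le: "ev u \<le> ev v \<Longrightarrow> set u \<subseteq> set v"
  unfolding ev_def le_fun_def by (metis count_list_0_iff le_zero_eq subsetI)

theorem lemma4p8:
  fixes p q r s :: "nat list"
  assumes "\<forall>a\<in>set p. 0 < a" and "\<forall>a\<in>set q. 0 < a"
      and "\<forall>a\<in>set r. 0 < a" and "\<forall>a\<in>set s. 0 < a"
      and "ev p = ev q" and "ev q \<le> ev r" and "ev q \<le> ev s"
  shows "baxt_equiv (s @ p @ r) (s @ q @ r)"
proof -
  have "mset p = mset q"
    using \<open>ev p = ev q\<close> by (rule mset_eq_if_ev_eq)
  moreover have "set p \<subseteq> set s" and "set p \<subseteq> set r"
    using assms(5-7) by (simp_all add: set_subset_if_ev_le)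
  ultimately show ?thesis
    unfolding baxt_equiv_def P_baxt_def by (simp add: P_sharp_mset_eq P_sylv_mset_eq)
qed

end
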